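(* Let $\Gamma_1=(V_1,E_1)$ be a simple undirected graph with a strong edge coloring $\mathcal{E}_1$ with colors from $\mathcal{S}^\circ$, and let $\Gamma_2=(V_2,W_2,E_2)$ be a bipartite graph with a strong edge coloring $\mathcal{E}_2$ with colors from $\mathcal{S}_2$. Let $\mathcal{S}_\circ$ be a set disjoint from $\mathcal{S}^\circ$ with a bijection $\sigma:\mathcal{S}^\circ\to\mathcal{S}_\circ$, and let $\mathcal{E}^\circ,\mathcal{E}_\circ$ be opposing orientations of $\mathcal{E}_1$ with colors from $\mathcal{S}^\circ$ and $\mathcal{S}_\circ$ respectively: for each edge $\{x,u\}\in E_1$ of color $s$, one chosen direction $\langle x,u\rangle$ receives $(\langle x,u\rangle,s)\in\mathcal{E}^\circ$ and the reverse direction receives $(\langle u,x\rangle,\sigma(s))\in\mathcal{E}_\circ$. Let $\mathcal{V}$ be a proper vertex coloring of $\Gamma_1$ with colors from a set $\mathcal{S}'$ disjoint from $\mathcal{S}^\circ\cup\mathcal{S}_\circ$. Let $\Gamma=\Gamma_1:\Gamma_2$ be the bipartite graph with vertex classes $V_1\times V_2$ and $V_1\times W_2$ and edge set $E=\{((x,y),(u,v)) : (y,v)\in E_2, \text{ and } x=u \text{ or } \{x,u\}\in E_1\}$. Then $$\mathcal{E}=\{((x,y),(u,v),(s,s_2)) : (y,v,s_2)\in\mathcal{E}_2; \text{ and either } x=u \text{ with } (x,s)\in\mathcal{V}, \text{ or } (\langle x,u\rangle,s)\in\mathcal{E}^\circ\cup\mathcal{E}_\circ\}$$ is a strong edge coloring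 of $\Gamma$ with colors from $(\mathcal{S}'\cup\mathcal{S}^\circ\cup\mathcal{S}_\circ)\times\mathcal{S}_2$.
   Context: A vertex coloring is written as a set of pairs $(v,s)$, $v$ a vertex and $s$ its color; proper means adjacent vertices get different colors. $\langle x,u\rangle$ denotes the directed edge $x\to u$. For an undirected graph, an edge coloring assigns one color to each edge so that edges sharing a vertex get different colors; it is a strong edge coloring if in addition no two distinct edges of the same color are both adjacent to (share a vertex with) a common edge, i.e. each color class is an induced matching. A bipartite graph is written $(V,W,E)$ with $V\cap W=\emptyset$, $E\subseteq V\times W$, and an edge coloring of it is written as a set of triples $(v,w,s)$ with each edge occurring with exactly one color; the strong condition is the same: if $(v,w,s),(v',w',s)$ are distinct then $v\neq v'$, $w\ne w'$, and neither $(v,w')$ nor $(v',w)$ is an edge. *)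

theory Defs
  imports Main
begin

definition simple_graph :: "'a set \<Rightarrow> 'a set set \<Rightarrow> bool" where
  "simple_graph V E \<longleftrightarrow> (\<forall>e\<in>E. e \<subseteq> V \<and> card e = 2)"

definition strong_edge_coloring :: "'a set set \<Rightarrow> ('a set \<times> 'c) set \<Rightarrow> 'c set \<Rightarrow> bool" where
  "strong_edge_coloring E C S \<longleftrightarrow>
     (\<forall>(e,s)\<in>C. e \<in> E \<and> s \<in> S) \<and>
     (\<forall>e\<in>E. \<exists>!s. (e,s) \<in> C) \<and>
     (\<forall>e e' s. (e,s) \<in> C \<longrightarrow> (e',s) \<in> C \<longrightarrow> e \<noteq> e' \<longrightarrow>
        e \<inter> e' = {} \<and> \<not> (\<exists>f\<in>E. f \<inter> e \<noteq> {} \<and> f \<inter> e' \<noteq> {}))"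

definition bipartite_graph :: "'a set \<Rightarrow> 'a set \<Rightarrow> ('a \<times> 'a) set \<Rightarrow> bool" where
  "bipartite_graph V W E \<longleftrightarrow> V \<inter> W = {} \<and> E \<subseteq> V \<times> W"

definition bip_strong_edge_coloring ::
  "('a \<times> 'a) set \<Rightarrow> ('a \<times> 'a \<times> 'c) set \<Rightarrow> 'c set \<Rightarrow> bool" where
  "bip_strong_edge_coloring E C S \<longleftrightarrow>
     (\<forall>(v,w,s)\<in>C. (v,w) \<in> E \<and> s \<in> S) \<and>
     (\<forall>(v,w)\<in>E. \<exists>!s. (v,w,s) \<in> C) \<and>
     (\<forall>v w v' w' s. (v,w,s) \<in> C \<longrightarrow> (v',w',s) \<in> C \<longrightarrow> (v,w) \<noteq> (v',w') \<longrightarrow>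
        v \<noteq> v' \<and> w \<noteq> w' \<and> (v,w') \<notin> E \<and> (v',w) \<notin> E)"

definition opposing_orientations ::
  "('a set \<times> 'c) set \<Rightarrow> ('c \<Rightarrow> 'c) \<Rightarrow> (('a \<times> 'a) \<times> 'c) set \<Rightarrow> (('a \<times> 'a) \<times> 'c) set \<Rightarrow> bool" where
  "opposing_orientations C \<sigma> Eo Eu \<longleftrightarrow>
     (\<forall>((x,u),s)\<in>Eo. ({x,u},s) \<in> C) \<and>
     (\<forall>x u s. ({x,u},s) \<in> C \<longrightarrow> (((x,u),s) \<in> Eo \<longleftrightarrow> ((u,x),s) \<notin> Eo)) \<and>
     Eu = {((u,x), \<sigma> s) | x u s. ((x,u),s) \<in> Eo}"

definition proper_vertex_coloring :: "'a set \<Rightarrow> 'a set set \<Rightarrow> ('a \<times> 'c) set \<Rightarrow> 'c set \<Rightarrow> bool" where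
  "proper_vertex_coloring V E C S \<longleftrightarrow>
     (\<forall>(v,s)\<in>C. v \<in> V \<and> s \<in> S) \<and>
     (\<forall>v\<in>V. \<exists>!s. (v,s) \<in> C) \<and>
     (\<forall>x u s t. {x,u} \<in> E \<longrightarrow> (x,s) \<in> C \<longrightarrow> (u,t) \<in> C \<longrightarrow> s \<noteq> t)"

definition colon_product_edges ::
  "'a set \<Rightarrow> 'a set set \<Rightarrow> ('b \<times> 'b) set \<Rightarrow> (('a \<times> 'b) \<times> ('a \<times> 'b)) set" where
  "colon_product_edges V1 E1 E2 =
     {((x,y),(u,v)). (y,v) \<in> E2 \<and> x \<in> V1 \<and> u \<in> V1 \<and> (x = u \<or> {x,u} \<in> E1)}"

end

theory Submission
  imports Defs
begin

text \<open>The colon product is the tensor product of the closed adjacency relation of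
  \<open>\<Gamma>\<^sub>1\<close> (adjacency together with the diagonal) with \<open>E\<^sub>2\<close>, and the coloring is the
  componentwise product. A product of strong colorings of two relations is strong: two
  edges of equal color differ in some coordinate, and that coordinate already separates
  them. So it suffices that the vertex coloring on the diagonal together with the two
  orientations on the arcs strongly colors the closed adjacency relation. The three color
  classes are disjoint; a vertex color class is an independent set by properness, and an
  arc color class consists of orientations of one color class of \<open>\<E>\<^sub>1\<close>, an induced
  matching, oriented consistently because \<open>\<sigma>\<close> is injective and \<open>\<E>\<^sup>\<circ>\<close> picks one
  direction per edge.\<close>

lemma bip_strong_edge_coloringI:
  assumes "\<And>v w s. (v, w, s) \<in> C \<Longrightarrow> (v, w) \<in> E \<and> s \<in> S"
    and "\<And>v w. (v, w) \<in> E \<Longrightarrow> \<exists>!s. (v, w, s) \<in> C"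
    and "\<And>v w v' w' s. (v, w, s) \<in> C \<Longrightarrow> (v', w', s) \<in> C \<Longrightarrow> (v, w) \<noteq> (v', w') \<Longrightarrow>
           v \<noteq> v' \<and> w \<noteq> w' \<and> (v, w') \<notin> E \<and> (v', w) \<notin> E"
  shows "bip_strong_edge_coloring E C S"
  unfolding bip_strong_edge_coloring_def using assms by blast

lemma bip_strong_edge_coloring_memD:
  "bip_strong_edge_coloring E C S \<Longrightarrow> (v, w, s) \<in> C \<Longrightarrow> (v, w) \<in> E \<and> s \<in> S"
  unfolding bip_strong_edge_coloring_def by blast

lemma bip_strong_edge_coloring_ex1:
  "bip_strong_edge_coloring E C S \<Longrightarrow> (v, w) \<in> E \<Longrightarrow> \<exists>!s. (v, w, s) \<in> C"
  unfolding bip_strong_edge_coloring_def by blast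

lemma bip_strong_edge_coloring_separated:
  "bip_strong_edge_coloring E C S \<Longrightarrow> (v, w, s) \<in> C \<Longrightarrow> (v', w', s) \<in> C \<Longrightarrow> (v, w) \<noteq> (v', w') \<Longrightarrow>
     v \<noteq> v' \<and> w \<noteq> w' \<and> (v, w') \<notin> E \<and> (v', w) \<notin> E"
  unfolding bip_strong_edge_coloring_def by blast

definition tensor_edges ::
  "('a \<times> 'a) set \<Rightarrow> ('b \<times> 'b) set \<Rightarrow> (('a \<times> 'b) \<times> ('a \<times> 'b)) set" where
  "tensor_edges E F = {((x, y), (u, v)). (x, u) \<in> E \<and> (y, v) \<in> F}"

definition tensor_coloring ::
  "('a \<times> 'a \<times> 'c) set \<Rightarrow> ('b \<times> 'b \<times> 'd) set \<Rightarrow> (('a \<times> 'b) \<times> ('a \<times> 'b) \<times> ('c \<times> 'd)) set" where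
  "tensor_coloring C D = {((x, y), (u, v), (s, t)) | x y u v s t. (x, u, s) \<in> C \<and> (y, v, t) \<in> D}"

lemma tensor_coloring_iff [simp]:
  "((x, y), (u, v), (s, t)) \<in> tensor_coloring C D \<longleftrightarrow> (x, u, s) \<in> C \<and> (y, v, t) \<in> D"
  unfolding tensor_coloring_def by blast

lemma tensor_edges_iff [simp]:
  "((x, y), (u, v)) \<in> tensor_edges E F \<longleftrightarrow> (x, u) \<in> E \<and> (y, v) \<in> F"
  unfolding tensor_edges_def by blast

lemma bip_strong_edge_coloring_tensor:
  assumes C: "bip_strong_edge_coloring E C S" and D: "bip_strong_edge_coloring F D T"
  shows "bip_strong_edge_coloring (tensor_edges E F) (tensor_coloring C D) (S \<times> T)"
proof (rule bip_strong_edge_coloringI)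
  fix p q c
  assume "(p, q, c) \<in> tensor_coloring C D"
  then obtain x y u v s t where "p = (x, y)" "q = (u, v)" "c = (s, t)"
    "(x, u, s) \<in> C" "(y, v, t) \<in> D"
    unfolding tensor_coloring_def by blast
  then show "(p, q) \<in> tensor_edges E F \<and> c \<in> S \<times> T"
    using bip_strong_edge_coloring_memD[OF C] bip_strong_edge_coloring_memD[OF D] by simp
next
  fix p q
  assume "(p, q) \<in> tensor_edges E F"
  then obtain x y u v where pq: "p = (x, y)" "q = (u, v)" and "(x, u) \<in> E" "(y, v) \<in> F"
    unfolding tensor_edges_def by blast
  obtain s where s: "(x, u, s) \<in> C" "\<And>s'. (x, u, s') \<in> C \<Longrightarrow> s' = s"
    using bip_strong_edge_coloring_ex1[OF C \<open>(x, u) \<in> E\<close>] by blast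
  obtain t where t: "(y, v, t) \<in> D" "\<And>t'. (y, v, t') \<in> D \<Longrightarrow> t' = t"
    using bip_strong_edge_coloring_ex1[OF D \<open>(y, v) \<in> F\<close>] by blast
  show "\<exists>!c. (p, q, c) \<in> tensor_coloring C D"
  proof (rule ex1I[of _ "(s, t)"])
    show "(p, q, (s, t)) \<in> tensor_coloring C D"
      using s(1) t(1) pq by simp
  next
    fix c
    assume "(p, q, c) \<in> tensor_coloring C D"
    then show "c = (s, t)"
      using s(2) t(2) pq by (cases c) simp
  qed
next
  fix p q p' q' c
  assume in1: "(p, q, c) \<in> tensor_coloring C D" and in2: "(p', q', c) \<in> tensor_coloring C D"
    and ne: "(p, q) \<noteq> (p', q')"
  obtain x y u v x' y' u' v' s t where
    eq: "p = (x, y)" "q = (u, v)" "p' = (x', y')" "q' = (u', v')" "c = (s, t)"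
    by (cases p, cases q, cases p', cases q', cases c) simp
  have C1: "(x, u, s) \<in> C" "(x', u', s) \<in> C" and D1: "(y, v, t) \<in> D" "(y', v', t) \<in> D"
    using in1 in2 unfolding eq by simp_all
  have "(x, u) \<noteq> (x', u') \<or> (y, v) \<noteq> (y', v')"
    using ne eq by blast
  then show "p \<noteq> p' \<and> q \<noteq> q' \<and> (p, q') \<notin> tensor_edges E F \<and> (p', q) \<notin> tensor_edges E F"
  proof
    assume "(x, u) \<noteq> (x', u')"
    from bip_strong_edge_coloring_separated[OF C C1 this] show ?thesis
      unfolding eq by simp
  next
    assume "(y, v) \<noteq> (y', v')"
    from bip_strong_edge_coloring_separated[OF D D1 this] show ?thesis
      unfolding eq by simp
  qed
qed

definition closed_adjacency :: "'a set \<Rightarrow> 'a set set \<Rightarrow> ('a \<times> 'a) set" where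
  "closed_adjacency V E = {(x, u). x \<in> V \<and> u \<in> V \<and> (x = u \<or> {x, u} \<in> E)}"

definition closed_coloring :: "('a \<times> 'c) set \<Rightarrow> (('a \<times> 'a) \<times> 'c) set \<Rightarrow> ('a \<times> 'a \<times> 'c) set" where
  "closed_coloring VC A = {(x, x, s) | x s. (x, s) \<in> VC} \<union> {(x, u, s) | x u s. ((x, u), s) \<in> A}"

lemma closed_coloring_iff [simp]:
  "(x, u, s) \<in> closed_coloring VC A \<longleftrightarrow> (x = u \<and> (x, s) \<in> VC) \<or> ((x, u), s) \<in> A"
  unfolding closed_coloring_def by blast

lemma colon_product_edges_eq_tensor_edges:
  "colon_product_edges V E F = tensor_edges (closed_adjacency V E) F"
  unfolding colon_product_edges_def tensor_edges_def closed_adjacency_def by auto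

locale oriented_vertex_colored_graph =
  fixes V :: "'a set" and E :: "'a set set" and C :: "('a set \<times> 'c) set"
    and S_up S_low S' :: "'c set" and \<sigma> :: "'c \<Rightarrow> 'c"
    and Eo Eu :: "(('a \<times> 'a) \<times> 'c) set" and VC :: "('a \<times> 'c) set"
  assumes simple: "simple_graph V E"
    and edge_coloring: "strong_edge_coloring E C S_up"
    and orientation_colors_disjoint: "S_up \<inter> S_low = {}"
    and \<sigma>_bij: "bij_betw \<sigma> S_up S_low"
    and orientations: "opposing_orientations C \<sigma> Eo Eu"
    and vertex_coloring: "proper_vertex_coloring V E VC S'"
    and vertex_colors_disjoint: "S' \<inter> (S_up \<union> S_low) = {}"
begin

lemma edge_endpoints: "{x, u} \<in> E \<Longrightarrow> x \<in> V \<and> u \<in> V \<and> x \<noteq> u"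
proof -
  assume "{x, u} \<in> E"
  then have "{x, u} \<subseteq> V" "card {x, u} = 2"
    using simple unfolding simple_graph_def by blast+
  then show ?thesis by (cases "x = u") auto
qed

lemma colored_edge: "(e, s) \<in> C \<Longrightarrow> e \<in> E \<and> s \<in> S_up"
  using edge_coloring[unfolded strong_edge_coloring_def, THEN conjunct1] by blast

lemma edge_color_unique: "(e, s) \<in> C \<Longrightarrow> (e, s') \<in> C \<Longrightarrow> s' = s"
  using edge_coloring[unfolded strong_edge_coloring_def, THEN conjunct2, THEN conjunct1] colored_edge
  by blast

lemma edge_color_exists: "e \<in> E \<Longrightarrow> \<exists>s. (e, s) \<in> C"
  using edge_coloring[unfolded strong_edge_coloring_def, THEN conjunct2, THEN conjunct1] by blast

lemma same_color_edges_separated: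
  assumes "({x, u}, s) \<in> C" "({x', u'}, s) \<in> C" "{x, u} \<noteq> {x', u'}"
  shows "x \<noteq> x' \<and> x \<noteq> u' \<and> u \<noteq> x' \<and> u \<noteq> u' \<and> {x, u'} \<notin> E \<and> {x', u} \<notin> E"
proof -
  have disjoint: "{x, u} \<inter> {x', u'} = {}"
    and no_edge_between: "\<And>f. f \<in> E \<Longrightarrow> f \<inter> {x, u} = {} \<or> f \<inter> {x', u'} = {}"
    using edge_coloring[unfolded strong_edge_coloring_def, THEN conjunct2, THEN conjunct2] assms
    by blast+
  have "{x, u'} \<notin> E" "{x', u} \<notin> E"
    using no_edge_between[of "{x, u'}"] no_edge_between[of "{x', u}"] by blast+
  with disjoint show ?thesis by blast
qed

lemma Eo_colored_edge: "((x, u), s) \<in> Eo \<Longrightarrow> ({x, u}, s) \<in> C"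
  using orientations unfolding opposing_orientations_def by fast

lemma Eo_reverse_iff: "({x, u}, s) \<in> C \<Longrightarrow> ((x, u), s) \<in> Eo \<longleftrightarrow> ((u, x), s) \<notin> Eo"
  using orientations unfolding opposing_orientations_def by blast

lemma Eu_iff: "((x, u), s) \<in> Eu \<longleftrightarrow> (\<exists>t. ((u, x), t) \<in> Eo \<and> s = \<sigma> t)"
  using orientations unfolding opposing_orientations_def by blast

lemma vertex_color: "(x, s) \<in> VC \<Longrightarrow> x \<in> V \<and> s \<in> S'"
  using vertex_coloring[unfolded proper_vertex_coloring_def, THEN conjunct1] by blast

lemma vertex_color_ex1: "x \<in> V \<Longrightarrow> \<exists>!s. (x, s) \<in> VC"
  using vertex_coloring[unfolded proper_vertex_coloring_def, THEN conjunct2, THEN conjunct1] by blast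

lemma Eo_arc:
  assumes "((x, u), s) \<in> Eo"
  shows "(x, u) \<in> closed_adjacency V E \<and> x \<noteq> u \<and> s \<in> S_up"
  using colored_edge[OF Eo_colored_edge[OF assms]] edge_endpoints
  unfolding closed_adjacency_def by blast

lemma Eu_arc:
  assumes "((x, u), s) \<in> Eu"
  shows "(x, u) \<in> closed_adjacency V E \<and> x \<noteq> u \<and> s \<in> S_low"
proof -
  obtain t where t: "((u, x), t) \<in> Eo" "s = \<sigma> t"
    using assms Eu_iff by blast
  have "\<sigma> t \<in> S_low"
    using Eo_arc[OF t(1)] \<sigma>_bij unfolding bij_betw_def by blast
  with Eo_arc[OF t(1)] t(2) show ?thesis
    unfolding closed_adjacency_def by (auto simp: insert_commute)
qed

lemma arc_color_iff:
  assumes c: "({x, u}, c) \<in> C"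
  shows "((x, u), s) \<in> Eo \<union> Eu \<longleftrightarrow> (((x, u), c) \<in> Eo \<and> s = c) \<or> (((u, x), c) \<in> Eo \<and> s = \<sigma> c)"
proof
  assume "((x, u), s) \<in> Eo \<union> Eu"
  then show "(((x, u), c) \<in> Eo \<and> s = c) \<or> (((u, x), c) \<in> Eo \<and> s = \<sigma> c)"
  proof
    assume Eo: "((x, u), s) \<in> Eo"
    then have "s = c"
      using edge_color_unique[OF c Eo_colored_edge] by blast
    with Eo show ?thesis by blast
  next
    assume "((x, u), s) \<in> Eu"
    then obtain t where t: "((u, x), t) \<in> Eo" "s = \<sigma> t"
      using Eu_iff by blast
    then have "t = c"
      using edge_color_unique[OF c] Eo_colored_edge[OF t(1)] by (simp add: insert_commute)
    with t show ?thesis by blast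
  qed
next
  assume "(((x, u), c) \<in> Eo \<and> s = c) \<or> (((u, x), c) \<in> Eo \<and> s = \<sigma> c)"
  then show "((x, u), s) \<in> Eo \<union> Eu"
    using Eu_iff by blast
qed

lemma arc_color_ex1:
  assumes "{x, u} \<in> E"
  shows "\<exists>!s. ((x, u), s) \<in> Eo \<union> Eu"
proof -
  obtain c where c: "({x, u}, c) \<in> C"
    using edge_color_exists[OF assms] by blast
  have "((x, u), c) \<in> Eo \<longleftrightarrow> ((u, x), c) \<notin> Eo"
    using Eo_reverse_iff[OF c] .
  then show ?thesis
    unfolding arc_color_iff[OF c] by blast
qed

lemma Eo_same_color_separated:
  assumes a: "((x, u), t) \<in> Eo" and a': "((x', u'), t) \<in> Eo" and ne: "(x, u) \<noteq> (x', u')"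
  shows "x \<noteq> x' \<and> u \<noteq> u' \<and> (x, u') \<notin> closed_adjacency V E \<and> (x', u) \<notin> closed_adjacency V E"
proof -
  have c: "({x, u}, t) \<in> C" and c': "({x', u'}, t) \<in> C"
    using Eo_colored_edge a a' by blast+
  have "{x, u} \<noteq> {x', u'}"
  proof
    assume "{x, u} = {x', u'}"
    with ne have "(x', u') = (u, x)"
      by (auto simp: doubleton_eq_iff)
    with a a' Eo_reverse_iff[OF c] show False by simp
  qed
  from same_color_edges_separated[OF c c' this] show ?thesis
    unfolding closed_adjacency_def by auto
qed

lemma Eu_same_color_separated:
  assumes a: "((x, u), s) \<in> Eu" and a': "((x', u'), s) \<in> Eu" and ne: "(x, u) \<noteq> (x', u')"
  shows "x \<noteq> x' \<and> u \<noteq> u' \<and> (x, u') \<notin> closed_adjacency V E \<and> (x', u) \<notin> closed_adjacency V E"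
proof -
  obtain t t' where t: "((u, x), t) \<in> Eo" "s = \<sigma> t" and t': "((u', x'), t') \<in> Eo" "s = \<sigma> t'"
    using a a' Eu_iff by meson
  have "t' = t"
    using \<sigma>_bij Eo_arc[OF t(1)] Eo_arc[OF t'(1)] t(2) t'(2)
    unfolding bij_betw_def inj_on_def by blast
  with t t' ne have "u \<noteq> u' \<and> x \<noteq> x' \<and> (u, x') \<notin> closed_adjacency V E \<and> (u', x) \<notin> closed_adjacency V E"
    using Eo_same_color_separated[of u x t u' x'] by blast
  then show ?thesis
    unfolding closed_adjacency_def by (auto simp: insert_commute)
qed

lemma vertex_same_color_separated:
  assumes "(x, s) \<in> VC" "(x', s) \<in> VC" "x \<noteq> x'"
  shows "(x, x') \<notin> closed_adjacency V E"
  using vertex_coloring[unfolded proper_vertex_coloring_def, THEN conjunct2, THEN conjunct2] assms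
  unfolding closed_adjacency_def by blast

lemma closed_coloring_cases:
  assumes "(x, u, s) \<in> closed_coloring VC (Eo \<union> Eu)"
  obtains "x = u" "(x, s) \<in> VC" "s \<in> S'"
    | "((x, u), s) \<in> Eo" "s \<in> S_up"
    | "((x, u), s) \<in> Eu" "s \<in> S_low"
  using assms vertex_color Eo_arc Eu_arc by auto

lemma bip_strong_edge_coloring_closed_coloring:
  "bip_strong_edge_coloring (closed_adjacency V E) (closed_coloring VC (Eo \<union> Eu)) (S' \<union> S_up \<union> S_low)"
proof (rule bip_strong_edge_coloringI)
  fix x u s
  assume "(x, u, s) \<in> closed_coloring VC (Eo \<union> Eu)"
  then show "(x, u) \<in> closed_adjacency V E \<and> s \<in> S' \<union> S_up \<union> S_low"
    by (cases rule: closed_coloring_cases)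
      (auto dest: vertex_color Eo_arc Eu_arc simp: closed_adjacency_def)
next
  fix x u
  assume xu: "(x, u) \<in> closed_adjacency V E"
  show "\<exists>!s. (x, u, s) \<in> closed_coloring VC (Eo \<union> Eu)"
  proof (cases "x = u")
    case True
    have "((x, x), s) \<notin> Eo \<union> Eu" for s
      using Eo_arc Eu_arc by blast
    with True xu vertex_color_ex1 show ?thesis
      unfolding closed_adjacency_def by simp
  next
    case False
    with xu have "{x, u} \<in> E"
      unfolding closed_adjacency_def by simp
    with False show ?thesis
      using arc_color_ex1 by simp
  qed
next
  fix x u x' u' s
  assume a: "(x, u, s) \<in> closed_coloring VC (Eo \<union> Eu)"
    and a': "(x', u', s) \<in> closed_coloring VC (Eo \<union> Eu)" and ne: "(x, u) \<noteq> (x', u')"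
  have disjoint: "S' \<inter> S_up = {}" "S' \<inter> S_low = {}" "S_up \<inter> S_low = {}"
    using vertex_colors_disjoint orientation_colors_disjoint by auto
  from a show "x \<noteq> x' \<and> u \<noteq> u' \<and> (x, u') \<notin> closed_adjacency V E \<and> (x', u) \<notin> closed_adjacency V E"
  proof (cases rule: closed_coloring_cases)
    case 1
    with a' disjoint have "x' = u' \<and> (x', s) \<in> VC"
      by (cases rule: closed_coloring_cases) auto
    with 1 ne show ?thesis
      using vertex_same_color_separated by blast
  next
    case 2
    with a' disjoint have "((x', u'), s) \<in> Eo"
      by (cases rule: closed_coloring_cases) auto
    with 2 ne show ?thesis
      using Eo_same_color_separated by blast
  next
    case 3
    with a' disjoint have "((x', u'), s) \<in> Eu"
      by (cases rule: closed_coloring_cases) auto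
    with 3 ne show ?thesis
      using Eu_same_color_separated by blast
  qed
qed

end

theorem lemma5p1:
  fixes V1 :: "'a set" and E1 :: "'a set set" and C1 :: "('a set \<times> 'c) set"
    and V2 W2 :: "'b set" and E2 :: "('b \<times> 'b) set" and C2 :: "('b \<times> 'b \<times> 'd) set"
    and S_up S_low S' :: "'c set" and S2 :: "'d set" and \<sigma> :: "'c \<Rightarrow> 'c"
    and Eo Eu :: "(('a \<times> 'a) \<times> 'c) set" and VC :: "('a \<times> 'c) set"
  assumes "simple_graph V1 E1"
    and "strong_edge_coloring E1 C1 S_up"
    and "bipartite_graph V2 W2 E2"
    and "bip_strong_edge_coloring E2 C2 S2"
    and "S_up \<inter> S_low = {}"
    and "bij_betw \<sigma> S_up S_low"
    and "opposing_orientations C1 \<sigma> Eo Eu"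
    and "proper_vertex_coloring V1 E1 VC S'"
    and "S' \<inter> (S_up \<union> S_low) = {}"
  shows "bip_strong_edge_coloring (colon_product_edges V1 E1 E2)
           {((x,y),(u,v),(s,s2)) | x y u v s s2. (y,v,s2) \<in> C2 \<and>
              ((x = u \<and> (x,s) \<in> VC) \<or> ((x,u),s) \<in> Eo \<union> Eu)}
           ((S' \<union> S_up \<union> S_low) \<times> S2)"
proof -
  interpret oriented_vertex_colored_graph V1 E1 C1 S_up S_low S' \<sigma> Eo Eu VC
    using assms by unfold_locales
  have "{((x,y),(u,v),(s,s2)) | x y u v s s2. (y,v,s2) \<in> C2 \<and>
          ((x = u \<and> (x,s) \<in> VC) \<or> ((x,u),s) \<in> Eo \<union> Eu)}
        = tensor_coloring (closed_coloring VC (Eo \<union> Eu)) C2"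
    unfolding tensor_coloring_def closed_coloring_iff by blast
  with bip_strong_edge_coloring_tensor[OF bip_strong_edge_coloring_closed_coloring assms(4)]
  show ?thesis
    by (simp add: colon_product_edges_eq_tensor_edges)
qed

end
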